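(* For any positive integer $M$, the algorithm $\mathbf{Est\_Amp}(\mathcal A,\chi,M)$ outputs $\tilde a\in[0,1]$ such that for any positive integer $k$, $$|\tilde a-a|\le 2\pi k\frac{\sqrt{a(1-a)}}{M}+k^2\frac{\pi^2}{M^2}$$ with probability at least $8/\pi^2$ when $k=1$, and with probability greater than $1-\frac{1}{2(k-1)}$ when $k\ge2$. If $a=0$ then $\tilde a=0$ with certainty, and if $a=1$ and $M$ is even then $\tilde a=1$ with certainty.
   Context: Let $\mathcal H$ be a finite-dimensional Hilbert space with a fixed orthonormal computational basis $\{|x\rangle\}$ indexed by a finite set of nonnegative integers containing $0$. Let $\chi:\mathbb Z\to\{0,1\}$ be a Boolean function; a basis state $|x\rangle$ is good if $\chi(x)=1$. For a state $|\Upsilon\rangle$, let $|\Upsilon_1\rangle$ be its orthogonal projection onto the span of the good basis states. Let $\mathcal A$ be a unitary on $\mathcal H$, $|\Psi\rangle=\mathcal A|0\rangle$, $a=\langle\Psi_1|\Psi_1\rangle$. Let $\mathbf S_\chi|x\rangle=(-1)^{\chi(x)}|x\rangle$, $\mathbf S_0$ the unitary negating $|0\rangle$ and fixing all other basis states, and $\mathbf Q=-\mathcal A\mathbf S_0\mathcal A^{-1}\mathbf S_\chi$. For $M\ge1$, $\mathbf F_M|x\rangle=\frac{1}{\sqrt M}\sum_{y=0}^{M-1}e^{2\pi ixy/M}|y\rangle$ on an $M$-dimensional register with basis $|0\rangle,\dots,|M-1\rangle$, and for a unitary $\mathbf U$, $\Lambda_M(\mathbf U)$ is the unitary $|j\rangle|y\rangle\mapsto|j\rangle(\mathbf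 U^j|y\rangle)$ for $0\le j<M$. Algorithm $\mathbf{Est\_Amp}(\mathcal A,\chi,M)$: (1) prepare the state $|0\rangle\otimes\mathcal A|0\rangle$ (first register $M$-dimensional, second in $\mathcal H$); (2) apply $\mathbf F_M$ to the first register; (3) apply $\Lambda_M(\mathbf Q)$; (4) apply $\mathbf F_M^{-1}$ to the first register; (5) measure the first register in the computational basis, obtaining $y$; (6) output $\tilde a=\sin^2(\pi y/M)$. *)

theory Defs
  imports Complex_Main
begin

text \<open>The Hilbert space H has computational basis indexed by a finite set
  B of natural numbers with 0 in B. Vectors are functions nat => complex (only the
  values on B matter); operators are matrices nat => nat => complex acting by summation
  over B. The joint space (M-dimensional register times H) has basis indexed by pairs
  (j, x) with j < M and x in B.\<close>

type_synonym vec = "nat \<Rightarrow> complex"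
type_synonym mat = "nat \<Rightarrow> nat \<Rightarrow> complex"
type_synonym jvec = "nat \<times> nat \<Rightarrow> complex"

definition inner_on :: "nat set \<Rightarrow> vec \<Rightarrow> vec \<Rightarrow> complex" where
  "inner_on B u v = (\<Sum>x\<in>B. cnj (u x) * v x)"

definition mat_app :: "nat set \<Rightarrow> mat \<Rightarrow> vec \<Rightarrow> vec" where
  "mat_app B U v = (\<lambda>x. \<Sum>y\<in>B. U x y * v y)"

definition adjoint :: "mat \<Rightarrow> mat" where
  "adjoint U = (\<lambda>x y. cnj (U y x))"

definition unitary_on :: "nat set \<Rightarrow> mat \<Rightarrow> bool" where
  "unitary_on B U \<longleftrightarrow>
     (\<forall>x\<in>B. \<forall>y\<in>B. (\<Sum>z\<in>B. cnj (U z x) * U z y) = (if x = y then 1 else 0)) \<and>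
     (\<forall>x\<in>B. \<forall>y\<in>B. (\<Sum>z\<in>B. U x z * cnj (U y z)) = (if x = y then 1 else 0))"

definition ket :: "nat \<Rightarrow> vec" where
  "ket a = (\<lambda>x. if x = a then 1 else 0)"

definition S_chi :: "(int \<Rightarrow> nat) \<Rightarrow> vec \<Rightarrow> vec" where
  "S_chi \<chi> v = (\<lambda>x. (-1) ^ \<chi> (int x) * v x)"

definition S_zero :: "vec \<Rightarrow> vec" where
  "S_zero v = (\<lambda>x. if x = 0 then - v x else v x)"

text \<open>Q = - A S_0 A^{-1} S_chi; for the unitary A the inverse is the adjoint.\<close>
definition Q_op :: "nat set \<Rightarrow> mat \<Rightarrow> (int \<Rightarrow> nat) \<Rightarrow> vec \<Rightarrow> vec" where
  "Q_op B A \<chi> v = (\<lambda>x. - mat_app B A (S_zero (mat_app B (adjoint A) (S_chi \<chi> v))) x)"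

definition Psi :: "nat set \<Rightarrow> mat \<Rightarrow> vec" where
  "Psi B A = mat_app B A (ket 0)"

definition good_part :: "(int \<Rightarrow> nat) \<Rightarrow> vec \<Rightarrow> vec" where
  "good_part \<chi> v = (\<lambda>x. if \<chi> (int x) = 1 then v x else 0)"

definition amp :: "nat set \<Rightarrow> mat \<Rightarrow> (int \<Rightarrow> nat) \<Rightarrow> real" where
  "amp B A \<chi> = Re (inner_on B (good_part \<chi> (Psi B A)) (good_part \<chi> (Psi B A)))"

definition QFT :: "nat \<Rightarrow> mat" where
  "QFT M = (\<lambda>y x. exp (2 * of_real pi * \<i> * of_nat x * of_nat y / of_nat M) / of_real (sqrt (real M)))"

definition QFT_inv :: "nat \<Rightarrow> mat" where
  "QFT_inv M = adjoint (QFT M)"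

definition on_first :: "nat \<Rightarrow> mat \<Rightarrow> jvec \<Rightarrow> jvec" where
  "on_first M U \<psi> = (\<lambda>(y, x). \<Sum>j<M. U y j * \<psi> (j, x))"

definition Lambda :: "(vec \<Rightarrow> vec) \<Rightarrow> jvec \<Rightarrow> jvec" where
  "Lambda U \<psi> = (\<lambda>(j, x). (U ^^ j) (\<lambda>x'. \<psi> (j, x')) x)"

definition init_state :: "nat set \<Rightarrow> mat \<Rightarrow> jvec" where
  "init_state B A = (\<lambda>(j, x). ket 0 j * Psi B A x)"

definition final_state :: "nat set \<Rightarrow> mat \<Rightarrow> (int \<Rightarrow> nat) \<Rightarrow> nat \<Rightarrow> jvec" where
  "final_state B A \<chi> M =
     on_first M (QFT_inv M) (Lambda (Q_op B A \<chi>) (on_first M (QFT M) (init_state B A)))"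

definition meas_prob :: "nat set \<Rightarrow> mat \<Rightarrow> (int \<Rightarrow> nat) \<Rightarrow> nat \<Rightarrow> nat \<Rightarrow> real" where
  "meas_prob B A \<chi> M y = (\<Sum>x\<in>B. (cmod (final_state B A \<chi> M (y, x)))\<^sup>2)"

definition est_output :: "nat \<Rightarrow> nat \<Rightarrow> real" where
  "est_output M y = (sin (pi * real y / real M))\<^sup>2"

definition est_prob :: "nat set \<Rightarrow> mat \<Rightarrow> (int \<Rightarrow> nat) \<Rightarrow> nat \<Rightarrow> (real \<Rightarrow> bool) \<Rightarrow> real" where
  "est_prob B A \<chi> M P = (\<Sum>y\<in>{y. y < M \<and> P (est_output M y)}. meas_prob B A \<chi> M y)"

end

(*
  Write a = sin^2 theta. The Grover iterate Q maps the span of the good part Psi_1 and the bad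
  part Psi_0 of Psi to itself, and Q^j Psi = sin((2j+1) theta)/sin theta Psi_1
  + cos((2j+1) theta)/cos theta Psi_0. After the inverse Fourier transform, the amplitude of y
  is therefore a combination of two geometric sums in e^(i(2 theta - 2 pi y/M)) and
  e^(i(-2 theta - 2 pi y/M)), and the probability of y is the average of two Fejer kernels
  peaked at +w and -w, where w = M theta / pi.

  Since y |-> sin^2(pi y/M) is even and M-periodic, an outcome within distance k of either
  peak yields |sin^2(pi y/M) - a| <= 2 pi k sqrt(a(1-a))/M + k^2 pi^2/M^2. A Fejer kernel puts
  mass at least 8/pi^2 on the two integers next to its peak (this is the inequality
  sin^2(pi d) (1/d^2 + 1/(1-d)^2) >= 8), mass greater than 1 - 1/(2(k-1)) within distance k of
  its peak (the far weights are at most 1/(4(n-w)^2)), and all of its mass on the peak when w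
  is an integer, which is the case for a = 0, and for a = 1 when M is even.
*)

theory Submission
  imports Defs "HOL-Analysis.Complex_Transcendental"
begin

unbundle no vec_syntax

section \<open>Elementary estimates\<close>

lemma cos_ge_one_minus_sq_half: "1 - x\<^sup>2 / 2 \<le> cos (x::real)"
proof -
  have "(sin (x/2))\<^sup>2 \<le> (x/2)\<^sup>2"
    using abs_sin_x_le_abs_x[of "x/2"] by (metis abs_le_square_iff)
  moreover have "cos x = 1 - 2 * (sin (x/2))\<^sup>2"
    using cos_double_sin[of "x/2"] by simp
  ultimately show ?thesis by (simp add: power_divide)
qed

lemma sin_ge_chord:
  assumes "0 \<le> x" "x \<le> y" "y \<le> pi"
  shows "x / y * sin y \<le> sin x"
proof (cases "y = 0")
  case False
  have "convex_on {0..pi} (\<lambda>x. - sin x)"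
    by (rule f''_ge0_imp_convex[where f' = "\<lambda>x. - cos x" and f'' = sin])
       (auto intro!: derivative_eq_intros sin_ge_zero)
  then have "- sin ((1 - x / y) *\<^sub>R 0 + (x / y) *\<^sub>R y) \<le> (1 - x / y) * - sin 0 + x / y * - sin y"
    using assms False by (intro convex_onD) (auto simp: field_simps)
  then show ?thesis using False by simp
qed (use assms in simp)

lemma sin_ge_Jordan:
  assumes "\<bar>x\<bar> \<le> pi / 2"
  shows "2 * \<bar>x\<bar> / pi \<le> \<bar>sin x\<bar>"
proof -
  have "2 * \<bar>x\<bar> / pi \<le> sin \<bar>x\<bar>"
    using sin_ge_chord[of "\<bar>x\<bar>" "pi / 2"] assms by (simp add: field_simps)
  then show ?thesis by (cases "x \<ge> 0") auto
qed

lemma abs_sin_sq_diff_le: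
  fixes x y :: real
  shows "\<bar>(sin x)\<^sup>2 - (sin y)\<^sup>2\<bar> \<le> \<bar>sin (2 * y)\<bar> * \<bar>x - y\<bar> + (x - y)\<^sup>2"
proof -
  define e where "e = x - y"
  have "(sin x)\<^sup>2 - (sin y)\<^sup>2 = sin (x + y) * sin (x - y)"
  proof -
    have "sin (x + y) * sin (x - y) = (sin x * cos y)\<^sup>2 - (cos x * sin y)\<^sup>2"
      unfolding sin_add sin_diff by (simp add: power2_eq_square algebra_simps)
    also have "\<dots> = (sin x)\<^sup>2 - (sin y)\<^sup>2"
      using sin_cos_squared_add[of x] sin_cos_squared_add[of y] by algebra
    finally show ?thesis by simp
  qed
  also have "\<dots> = (sin (2 * y) * cos e + cos (2 * y) * sin e) * sin e"
  proof -
    have "x + y = 2 * y + e" "x - y = e" by (simp_all add: e_def)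
    then show ?thesis by (simp only: sin_add)
  qed
  finally have "\<bar>(sin x)\<^sup>2 - (sin y)\<^sup>2\<bar> \<le> (\<bar>sin (2 * y)\<bar> * \<bar>cos e\<bar> + \<bar>cos (2 * y)\<bar> * \<bar>sin e\<bar>) * \<bar>sin e\<bar>"
    by (simp add: abs_mult mult_right_mono abs_triangle_ineq[THEN order_trans])
  also have "\<dots> \<le> (\<bar>sin (2 * y)\<bar> * 1 + 1 * \<bar>e\<bar>) * \<bar>e\<bar>"
    by (intro mult_mono add_mono) (auto simp: abs_sin_x_le_abs_x)
  finally show ?thesis by (simp add: e_def power2_eq_square algebra_simps)
qed

lemma sin_cos_arcsin_sqrt:
  assumes "0 \<le> a" "a \<le> 1"
  shows "sin (arcsin (sqrt a)) = sqrt a" "cos (arcsin (sqrt a)) = sqrt (1 - a)"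
proof -
  have "-1 \<le> sqrt a" "sqrt a \<le> 1"
    using assms by (auto intro: order_trans[OF _ real_sqrt_ge_zero])
  then show "sin (arcsin (sqrt a)) = sqrt a" "cos (arcsin (sqrt a)) = sqrt (1 - a)"
    using assms by (simp_all add: sin_arcsin cos_arcsin)
qed

lemma cos_pi_sq_mult_ge:
  assumes "0 \<le> u" "u \<le> 1 / 4"
  shows "(1 - 4 * u\<^sup>2)\<^sup>2 \<le> (cos (pi * u))\<^sup>2 * (1 + 4 * u\<^sup>2)"
proof -
  have u: "u\<^sup>2 \<le> 1 / 16"
    using assms power_mono[of u "1/4" 2] by (simp add: power_divide)
  have "pi\<^sup>2 \<le> (315/100)\<^sup>2"
    using pi_approx by (intro power_mono) auto
  then have "pi\<^sup>2 \<le> 10" by (simp add: power2_eq_square)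
  then have "1 - 5 * u\<^sup>2 \<le> cos (pi * u)"
    using cos_ge_one_minus_sq_half[of "pi * u"] mult_right_mono[of "pi\<^sup>2" 10 "u\<^sup>2"]
    by (simp add: power_mult_distrib)
  then have cos_ge: "(1 - 5 * u\<^sup>2)\<^sup>2 \<le> (cos (pi * u))\<^sup>2"
    using u by (intro power_mono) auto
  have "(1 - 5 * u\<^sup>2)\<^sup>2 * (1 + 4 * u\<^sup>2) - (1 - 4 * u\<^sup>2)\<^sup>2 = u\<^sup>2 * ((2 - 31 * u\<^sup>2) + 100 * u\<^sup>2 * u\<^sup>2)"
    by algebra
  moreover have "0 \<le> u\<^sup>2 * ((2 - 31 * u\<^sup>2) + 100 * u\<^sup>2 * u\<^sup>2)"
    using u by (intro mult_nonneg_nonneg add_nonneg_nonneg) auto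
  ultimately have "(1 - 4 * u\<^sup>2)\<^sup>2 \<le> (1 - 5 * u\<^sup>2)\<^sup>2 * (1 + 4 * u\<^sup>2)"
    by linarith
  also have "\<dots> \<le> (cos (pi * u))\<^sup>2 * (1 + 4 * u\<^sup>2)"
    using cos_ge by (intro mult_right_mono) auto
  finally show ?thesis .
qed

lemma sin_pi_sq_inverse_sq_sum_ge_8_left:
  assumes "0 < d" "d \<le> 1 / 2"
  shows "8 \<le> (sin (pi * d))\<^sup>2 * (1 / d\<^sup>2 + 1 / (1 - d)\<^sup>2)"
proof (cases "d \<le> 1 / 4")
  case True
  have "d / (1/4) * sin (pi / 4) \<le> sin (pi * d)"
    using sin_ge_chord[of "pi * d" "pi / 4"] True assms by (simp add: field_simps)
  then have "2 * sqrt 2 * d \<le> sin (pi * d)" by (simp add: sin_45 field_simps)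
  then have "8 * d\<^sup>2 \<le> (sin (pi * d))\<^sup>2"
    using assms power_mono[of "2 * sqrt 2 * d" "sin (pi * d)" 2] by (simp add: power_mult_distrib)
  have "8 \<le> 8 * d\<^sup>2 * (1 / d\<^sup>2 + 1 / (1 - d)\<^sup>2)"
    using assms by (simp add: field_simps)
  also have "\<dots> \<le> (sin (pi * d))\<^sup>2 * (1 / d\<^sup>2 + 1 / (1 - d)\<^sup>2)"
    using \<open>8 * d\<^sup>2 \<le> (sin (pi * d))\<^sup>2\<close> by (rule mult_right_mono) simp
  finally show ?thesis .
next
  case False
  define u where "u = 1 / 2 - d"
  have u: "0 \<le> u" "u \<le> 1 / 4" "1 - 4 * u\<^sup>2 = 4 * d * (1 - d)" "1 + 4 * u\<^sup>2 = 2 * (d\<^sup>2 + (1 - d)\<^sup>2)"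
    using False assms by (auto simp: u_def power2_eq_square algebra_simps)
  have "sin (pi * d) = cos (pi * u)"
    by (simp add: u_def right_diff_distrib cos_diff)
  moreover have "1 / d\<^sup>2 + 1 / (1 - d)\<^sup>2 = 8 * (1 + 4 * u\<^sup>2) / (1 - 4 * u\<^sup>2)\<^sup>2"
  proof -
    have "8 * (1 + 4 * u\<^sup>2) / (1 - 4 * u\<^sup>2)\<^sup>2 = 16 * (d\<^sup>2 + (1 - d)\<^sup>2) / (16 * (d\<^sup>2 * (1 - d)\<^sup>2))"
      unfolding u(3,4) by (simp add: power_mult_distrib)
    also have "\<dots> = 1 / d\<^sup>2 + 1 / (1 - d)\<^sup>2"
      using assms by (simp add: field_simps)
    finally show ?thesis ..
  qed
  moreover have "0 < (1 - 4 * u\<^sup>2)\<^sup>2"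
    using assms False by (simp add: u(3))
  ultimately show ?thesis
    using cos_pi_sq_mult_ge[OF u(1,2)] by (simp add: le_divide_eq algebra_simps)
qed

lemma sin_pi_sq_inverse_sq_sum_ge_8:
  assumes "0 < d" "d < 1"
  shows "8 \<le> (sin (pi * d))\<^sup>2 * (1 / d\<^sup>2 + 1 / (1 - d)\<^sup>2)"
proof (cases "d \<le> 1 / 2")
  case False
  have "sin (pi * (1 - d)) = sin (pi * d)"
    by (simp add: right_diff_distrib sin_diff)
  then show ?thesis
    using sin_pi_sq_inverse_sq_sum_ge_8_left[of "1 - d"] False assms by (simp add: add.commute)
qed (use sin_pi_sq_inverse_sq_sum_ge_8_left assms in simp)

lemma sum_lessThan_periodic_interval:
  fixes f :: "int \<Rightarrow> 'a::cancel_comm_monoid_add"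
  assumes "\<And>n. f (n + int M) = f n"
  shows "(\<Sum>y<M. f (int y)) = (\<Sum>n\<in>{c..<c + int M}. f n)"
proof -
  have step: "(\<Sum>i<M. f (c + 1 + int i)) = (\<Sum>i<M. f (c + int i))" for c
  proof -
    have "f c + (\<Sum>i<M. f (c + 1 + int i)) = (\<Sum>i<Suc M. f (c + int i))"
      by (subst sum.lessThan_Suc_shift) (simp add: algebra_simps)
    also have "\<dots> = f c + (\<Sum>i<M. f (c + int i))"
      using assms[of c] by (simp add: add.commute)
    finally show ?thesis by simp
  qed
  have "(\<Sum>i<M. f (c + int i)) = (\<Sum>i<M. f (0 + int i))"
  proof (induction c rule: int_induct[where k = 0])
    case (step2 i)
    then show ?case using step[of "i - 1"] by simp
  qed (use step in simp_all)
  moreover have "(\<Sum>i<M. f (c + int i)) = (\<Sum>n\<in>{c..<c + int M}. f n)"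
    by (rule sum.reindex_bij_witness[of _ "\<lambda>n. nat (n - c)" "\<lambda>i. c + int i"]) auto
  ultimately show ?thesis by simp
qed

lemma sum_inverse_sq_le_telescope:
  assumes "2 \<le> k" "k - 1 \<le> K"
  shows "(\<Sum>m\<in>{k..K}. 1 / (real m)\<^sup>2) \<le> 1 / (real k - 1) - 1 / real K"
  using assms(2)
proof (induction K rule: nat_induct_at_least)
  case base
  then show ?case using assms by (simp add: of_nat_diff)
next
  case (Suc K)
  have K: "K \<ge> 1" using Suc assms by simp
  have "1 / (real (Suc K))\<^sup>2 \<le> 1 / (real K * real (Suc K))"
    using K by (intro divide_left_mono) (auto simp: power2_eq_square)
  also have "\<dots> = 1 / real K - 1 / real (Suc K)"
    using K by (simp add: field_simps)
  finally have "1 / (real (Suc K))\<^sup>2 \<le> 1 / real K - 1 / real (Suc K)" .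
  moreover have "{k..Suc K} = insert (Suc K) {k..K}" using Suc by auto
  ultimately show ?case using Suc by simp
qed

lemma sum_inverse_sq_less:
  assumes "finite S" "2 \<le> k" "\<And>n. n \<in> S \<Longrightarrow> k \<le> n"
  shows "(\<Sum>n\<in>S. 1 / (real n)\<^sup>2) < 1 / (real k - 1)"
proof (cases "S = {}")
  case False
  define K where "K = Max S"
  have "k \<le> K"
    using False assms(1,3) by (auto simp: K_def Max_ge_iff)
  have "(\<Sum>n\<in>S. 1 / (real n)\<^sup>2) \<le> (\<Sum>n\<in>{k..K}. 1 / (real n)\<^sup>2)"
    using assms(1,3) by (intro sum_mono2) (auto simp: K_def)
  also have "\<dots> \<le> 1 / (real k - 1) - 1 / real K"
    using \<open>k \<le> K\<close> by (intro sum_inverse_sq_le_telescope[OF assms(2)]) simp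
  also have "\<dots> < 1 / (real k - 1)"
    using \<open>k \<le> K\<close> assms(2) by simp
  finally show ?thesis .
qed (use assms in simp)

lemma sum_inverse_sq_dist_less:
  assumes "finite I" "inj_on g I" "2 \<le> k" "\<And>i. i \<in> I \<Longrightarrow> real k < real_of_int (g i) - w"
  shows "(\<Sum>i\<in>I. 1 / (real_of_int (g i) - w)\<^sup>2) < 1 / (real k - 1)"
proof -
  define m where "m i = nat (g i - \<lfloor>w\<rfloor> - 1)" for i
  have m_ge: "k \<le> m i" and m_le: "real (m i) \<le> real_of_int (g i) - w"
    and m_eq: "real (m i) = real_of_int (g i - \<lfloor>w\<rfloor> - 1)" if "i \<in> I" for i
  proof -
    have "real_of_int (\<lfloor>w\<rfloor> + int k) < real_of_int (g i)"
      using assms(4)[OF that] by linarith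
    then have "int k \<le> g i - \<lfloor>w\<rfloor> - 1" by linarith
    then show "k \<le> m i" "real (m i) = real_of_int (g i - \<lfloor>w\<rfloor> - 1)"
      by (auto simp: m_def le_nat_iff)
    then show "real (m i) \<le> real_of_int (g i) - w" by linarith
  qed
  have "inj_on m I"
  proof (rule inj_onI)
    fix i j assume ij: "i \<in> I" "j \<in> I" "m i = m j"
    then have "g i = g j" using m_eq[of i] m_eq[of j] by simp
    then show "i = j" using assms(2) ij by (auto dest: inj_onD)
  qed
  have "(\<Sum>i\<in>I. 1 / (real_of_int (g i) - w)\<^sup>2) \<le> (\<Sum>i\<in>I. 1 / (real (m i))\<^sup>2)"
  proof (intro sum_mono frac_le power_mono)
    fix i assume "i \<in> I"
    then show "0 < (real (m i))\<^sup>2" "real (m i) \<le> real_of_int (g i) - w"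
      using m_ge[of i] m_le[of i] assms(3) by auto
  qed auto
  also have "\<dots> = (\<Sum>n\<in>m ` I. 1 / (real n)\<^sup>2)"
    using \<open>inj_on m I\<close> by (simp add: sum.reindex)
  also have "\<dots> < 1 / (real k - 1)"
    using m_ge assms(1,3) by (intro sum_inverse_sq_less) auto
  finally show ?thesis .
qed

section \<open>The Fejer kernel\<close>

definition cis_sum :: "nat \<Rightarrow> real \<Rightarrow> complex" where
  "cis_sum M t = (\<Sum>j<M. cis (real j * t))"

definition fejer :: "nat \<Rightarrow> real \<Rightarrow> real" where
  "fejer M t = (cmod (cis_sum M t))\<^sup>2 / (real M)\<^sup>2"

definition fejer_weight :: "nat \<Rightarrow> real \<Rightarrow> int \<Rightarrow> real" where
  "fejer_weight M w n = fejer M (2 * pi * (real_of_int n - w) / real M)"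

lemma fejer_nonneg: "0 \<le> fejer M t"
  by (simp add: fejer_def)

lemma fejer_weight_nonneg: "0 \<le> fejer_weight M w n"
  by (simp add: fejer_weight_def fejer_nonneg)

lemma cis_sum_add_2pi_multiple: "cis_sum M (t + 2 * pi * real_of_int q) = cis_sum M t"
proof -
  have "cis (real j * (t + 2 * pi * real_of_int q)) = cis (real j * t)" for j
  proof -
    have "cis (real j * (t + 2 * pi * real_of_int q))
        = cis (real j * t) * cis (2 * pi * real_of_int (int j * q))"
      by (simp add: cis_mult algebra_simps)
    then show ?thesis by simp
  qed
  then show ?thesis by (simp add: cis_sum_def)
qed

lemma fejer_add_2pi_multiple: "fejer M (t + 2 * pi * real_of_int q) = fejer M t"
  by (simp add: fejer_def cis_sum_add_2pi_multiple)

lemma fejer_minus: "fejer M (- t) = fejer M t"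
proof -
  have "cis_sum M (- t) = cnj (cis_sum M t)"
    by (simp add: cis_sum_def cis_cnj)
  then show ?thesis by (simp add: fejer_def)
qed

lemma fejer_zero: "M \<ge> 1 \<Longrightarrow> fejer M 0 = 1"
  by (simp add: fejer_def cis_sum_def)

lemma cis_sum_geometric: "(cis t - 1) * cis_sum M t = cis (real M * t) - 1"
proof (induction M)
  case (Suc M)
  have "(cis t - 1) * cis_sum (Suc M) t = (cis t - 1) * cis_sum M t + (cis t - 1) * cis (real M * t)"
    by (simp add: cis_sum_def algebra_simps)
  also have "\<dots> = cis (real (Suc M) * t) - 1"
    using Suc by (simp add: cis_mult algebra_simps)
  finally show ?case .
qed (simp add: cis_sum_def)

lemma cmod_cis_minus_one_sq: "(cmod (cis x - 1))\<^sup>2 = 4 * (sin (x / 2))\<^sup>2"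
proof -
  have "(cmod (cis x - 1))\<^sup>2 = (cos x - 1)\<^sup>2 + (sin x)\<^sup>2"
    by (simp add: cmod_power2)
  also have "\<dots> = 2 - 2 * cos x"
    by (simp add: power2_eq_square algebra_simps)
  also have "cos x = 1 - 2 * (sin (x / 2))\<^sup>2"
    using cos_double_sin[of "x / 2"] by simp
  finally show ?thesis by simp
qed

lemma fejer_closed_form:
  assumes "sin (t / 2) \<noteq> 0"
  shows "fejer M t = (sin (real M * t / 2))\<^sup>2 / ((real M)\<^sup>2 * (sin (t / 2))\<^sup>2)"
proof -
  have "(cmod (cis t - 1))\<^sup>2 * (cmod (cis_sum M t))\<^sup>2 = (cmod (cis (real M * t) - 1))\<^sup>2"
    by (metis cis_sum_geometric norm_mult power_mult_distrib)
  then have "(cmod (cis_sum M t))\<^sup>2 = (sin (real M * t / 2))\<^sup>2 / (sin (t / 2))\<^sup>2"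
    using assms by (simp add: cmod_cis_minus_one_sq field_simps)
  then show ?thesis by (simp add: fejer_def)
qed

lemma cmod_sum_cis_arith_sq: "(cmod (\<Sum>j<M. cis (\<alpha> + real j * t)))\<^sup>2 = (real M)\<^sup>2 * fejer M t"
proof -
  have "(\<Sum>j<M. cis (\<alpha> + real j * t)) = cis \<alpha> * cis_sum M t"
    by (simp add: cis_sum_def sum_distrib_left cis_mult)
  then show ?thesis
    by (cases "M = 0") (simp_all add: fejer_def cis_sum_def norm_mult)
qed

lemma sum_cis_roots_of_unity:
  assumes "0 < \<bar>d\<bar>" "\<bar>d\<bar> < int M"
  shows "(\<Sum>y<M. cis (2 * pi * real_of_int d * real y / real M)) = 0"
proof -
  define z where "z = cis (2 * pi * real_of_int d / real M)"
  have M: "M > 0" using assms by linarith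
  have z_power: "z ^ y = cis (2 * pi * real_of_int d * real y / real M)" for y
    unfolding z_def Complex.DeMoivre by (simp add: algebra_simps)
  have "z ^ M = cis (2 * pi * real_of_int d)"
    using M by (simp add: z_power)
  then have "z ^ M = 1" by simp
  moreover have "z \<noteq> 1"
  proof
    assume "z = 1"
    then have "cos (2 * pi * real_of_int d / real M) = 1"
      by (simp add: z_def complex_eq_iff)
    then obtain n :: int where "2 * pi * real_of_int d / real M = real_of_int n * 2 * pi"
      by (auto simp: cos_one_2pi_int)
    then have "real_of_int d = real_of_int (n * int M)"
      using M by (simp add: field_simps)
    then have "d = n * int M" by (simp only: of_int_eq_iff)
    then show False
      using assms mult_right_mono[of 1 "\<bar>n\<bar>" "int M"] by (cases "n = 0") (auto simp: abs_mult, linarith)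
  qed
  ultimately show ?thesis
    using geometric_sum[of z M] by (simp add: z_power[symmetric])
qed

lemma sum_cis_orthogonal:
  assumes "j < M" "l < M"
  shows "(\<Sum>y<M. cis ((real j - real l) * (2 * pi * (real y - w) / real M)))
       = (if j = l then of_nat M else 0)"
proof (cases "j = l")
  case False
  define d where "d = int j - int l"
  have d: "0 < \<bar>d\<bar>" "\<bar>d\<bar> < int M"
    using False assms by (auto simp: d_def)
  have M: "real M \<noteq> 0" using assms by simp
  have "cis ((real j - real l) * (2 * pi * (real y - w) / real M))
      = cis (- (2 * pi * real_of_int d * w / real M)) * cis (2 * pi * real_of_int d * real y / real M)" for y
    using M unfolding cis_mult by (intro arg_cong[where f = cis]) (simp add: d_def field_simps)
  then have "(\<Sum>y<M. cis ((real j - real l) * (2 * pi * (real y - w) / real M)))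
     = cis (- (2 * pi * real_of_int d * w / real M)) * (\<Sum>y<M. cis (2 * pi * real_of_int d * real y / real M))"
    by (simp add: sum_distrib_left)
  then show ?thesis
    using False sum_cis_roots_of_unity[OF d] by simp
qed simp

lemma cmod_cis_sum_sq: "complex_of_real ((cmod (cis_sum M t))\<^sup>2) = (\<Sum>j<M. \<Sum>l<M. cis ((real j - real l) * t))"
proof -
  have "complex_of_real ((cmod (cis_sum M t))\<^sup>2) = cis_sum M t * cnj (cis_sum M t)"
    by (rule complex_norm_square)
  also have "\<dots> = (\<Sum>j<M. \<Sum>l<M. cis (real j * t) * cis (- (real l * t)))"
    by (simp add: cis_sum_def cis_cnj sum_product)
  also have "\<dots> = (\<Sum>j<M. \<Sum>l<M. cis ((real j - real l) * t))"
    by (simp add: cis_mult algebra_simps)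
  finally show ?thesis .
qed

lemma sum_fejer_weight:
  assumes "M \<ge> 1"
  shows "(\<Sum>y<M. fejer_weight M w (int y)) = 1"
proof -
  let ?t = "\<lambda>y. 2 * pi * (real y - w) / real M"
  have "complex_of_real (\<Sum>y<M. fejer_weight M w (int y))
      = (\<Sum>y<M. complex_of_real ((cmod (cis_sum M (?t y)))\<^sup>2)) / (of_nat M)\<^sup>2"
    by (simp add: fejer_weight_def fejer_def sum_divide_distrib)
  also have "(\<Sum>y<M. complex_of_real ((cmod (cis_sum M (?t y)))\<^sup>2))
     = (\<Sum>j<M. \<Sum>l<M. \<Sum>y<M. cis ((real j - real l) * ?t y))"
    unfolding cmod_cis_sum_sq by (subst sum.swap) (rule sum.cong[OF refl], rule sum.swap)
  also have "\<dots> = (\<Sum>j<M. \<Sum>l<M. (if j = l then of_nat M else 0))"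
    by (intro sum.cong refl) (metis sum_cis_orthogonal lessThan_iff)
  also have "\<dots> = (of_nat M)\<^sup>2"
    by (simp add: power2_eq_square)
  finally have "complex_of_real (\<Sum>y<M. fejer_weight M w (int y)) = 1"
    using assms by simp
  then show ?thesis by (simp only: of_real_eq_1_iff)
qed

lemma fejer_weight_periodic: "M \<ge> 1 \<Longrightarrow> fejer_weight M w (n + int M) = fejer_weight M w n"
proof -
  assume "M \<ge> 1"
  then have "2 * pi * (real_of_int (n + int M) - w) / real M
           = 2 * pi * (real_of_int n - w) / real M + 2 * pi * real_of_int 1"
    by (simp add: field_simps)
  then show ?thesis by (simp only: fejer_weight_def fejer_add_2pi_multiple)
qed

lemma fejer_weight_le_inverse_sq:
  assumes M: "M \<ge> 1" and D: "0 < \<bar>real_of_int n - w\<bar>" "\<bar>real_of_int n - w\<bar> \<le> real M / 2"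
  shows "fejer_weight M w n \<le> 1 / (4 * (real_of_int n - w)\<^sup>2)"
proof -
  define D where "D = real_of_int n - w"
  define x where "x = pi * D / real M"
  have Mp: "real M > 0" using M by simp
  have abs_x: "\<bar>x\<bar> = pi * \<bar>D\<bar> / real M"
    using Mp by (simp add: x_def abs_mult)
  have "pi * \<bar>D\<bar> \<le> pi * (real M / 2)"
    using D by (simp add: D_def)
  then have "\<bar>x\<bar> \<le> pi / 2"
    using Mp by (simp add: abs_x field_simps)
  then have sin_x: "2 * \<bar>D\<bar> / real M \<le> \<bar>sin x\<bar>"
    using sin_ge_Jordan[of x] by (simp add: abs_x)
  have D_pos: "0 < 2 * \<bar>D\<bar> / real M" using D Mp by (simp add: D_def)
  then have "sin x \<noteq> 0" using sin_x by auto
  have "fejer_weight M w n = (sin (pi * D))\<^sup>2 / ((real M)\<^sup>2 * (sin x)\<^sup>2)"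
    using fejer_closed_form[of "2 * pi * D / real M" M] \<open>sin x \<noteq> 0\<close> Mp
    by (simp add: fejer_weight_def D_def[symmetric] x_def)
  also have "\<dots> \<le> 1 / ((real M)\<^sup>2 * (sin x)\<^sup>2)"
    by (intro divide_right_mono) (auto simp: abs_square_le_1)
  also have "\<dots> \<le> 1 / ((real M)\<^sup>2 * (2 * \<bar>D\<bar> / real M)\<^sup>2)"
    using sin_x D_pos Mp
    by (intro divide_left_mono mult_left_mono mult_pos_pos) (auto simp: abs_le_square_iff[symmetric])
  also have "(real M)\<^sup>2 * (2 * \<bar>D\<bar> / real M)\<^sup>2 = 4 * D\<^sup>2"
    using Mp by (simp add: field_simps power2_eq_square)
  finally show ?thesis by (simp add: D_def)
qed

lemma fejer_ge_sinc_sq: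
  assumes M: "M \<ge> 1" and e: "0 < e" "e < 1"
  shows "(sin (pi * e))\<^sup>2 / (pi\<^sup>2 * e\<^sup>2) \<le> fejer M (2 * pi * e / real M)"
proof -
  define x where "x = pi * e / real M"
  have Mp: "real M > 0" using M by simp
  have "0 < x" using e Mp by (simp add: x_def)
  moreover have "x < pi"
    using e M mult_strict_left_mono[of "e / real M" 1 pi] by (simp add: x_def divide_less_eq)
  ultimately have sin_x: "0 < sin x" "sin x \<le> x"
    using sin_gt_zero sin_x_le_x by auto
  have "(sin (pi * e))\<^sup>2 / (pi\<^sup>2 * e\<^sup>2) = (sin (pi * e))\<^sup>2 / ((real M)\<^sup>2 * x\<^sup>2)"
    using Mp by (simp add: x_def power_mult_distrib power_divide)
  also have "\<dots> \<le> (sin (pi * e))\<^sup>2 / ((real M)\<^sup>2 * (sin x)\<^sup>2)"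
    using sin_x Mp by (intro divide_left_mono mult_left_mono power_mono mult_pos_pos) auto
  also have "\<dots> = fejer M (2 * pi * e / real M)"
    using fejer_closed_form[of "2 * pi * e / real M" M] sin_x Mp by (simp add: x_def)
  finally show ?thesis .
qed

lemma fejer_weight_two_nearest_ge:
  assumes M: "M \<ge> 1"
  shows "8 / pi\<^sup>2 \<le> fejer_weight M w \<lfloor>w\<rfloor> + fejer_weight M w (\<lfloor>w\<rfloor> + 1)"
proof -
  define d where "d = w - real_of_int \<lfloor>w\<rfloor>"
  have d: "0 \<le> d" "d < 1"
    using real_of_int_floor_add_one_gt[of w] by (auto simp: d_def simp del: real_of_int_floor_add_one_gt)
  have weight_floor: "fejer_weight M w \<lfloor>w\<rfloor> = fejer M (2 * pi * d / real M)"
    unfolding fejer_weight_def d_def by (metis fejer_minus minus_diff_eq mult_minus_right minus_divide_left)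
  have weight_ceiling: "fejer_weight M w (\<lfloor>w\<rfloor> + 1) = fejer M (2 * pi * (1 - d) / real M)"
    by (simp add: fejer_weight_def d_def algebra_simps)
  show ?thesis
  proof (cases "d = 0")
    case True
    have "(3::real)\<^sup>2 \<le> pi\<^sup>2" using pi_gt3 by (intro power_mono) auto
    then have "8 / pi\<^sup>2 \<le> 1" by simp
    moreover have "fejer_weight M w \<lfloor>w\<rfloor> = 1"
      using True fejer_zero[OF M] by (simp add: weight_floor)
    ultimately show ?thesis
      using fejer_weight_nonneg[of M w "\<lfloor>w\<rfloor> + 1"] by linarith
  next
    case False
    then have "0 < d" using d by simp
    have "sin (pi * (1 - d)) = sin (pi * d)" by (simp add: right_diff_distrib sin_diff)
    then have "(sin (pi * d))\<^sup>2 / (pi\<^sup>2 * d\<^sup>2) + (sin (pi * d))\<^sup>2 / (pi\<^sup>2 * (1 - d)\<^sup>2)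
        \<le> fejer_weight M w \<lfloor>w\<rfloor> + fejer_weight M w (\<lfloor>w\<rfloor> + 1)"
      using fejer_ge_sinc_sq[OF M \<open>0 < d\<close> d(2)] fejer_ge_sinc_sq[OF M, of "1 - d"] \<open>0 < d\<close> d(2)
      unfolding weight_floor weight_ceiling by (intro add_mono) auto
    moreover have "(sin (pi * d))\<^sup>2 / (pi\<^sup>2 * d\<^sup>2) + (sin (pi * d))\<^sup>2 / (pi\<^sup>2 * (1 - d)\<^sup>2)
        = (sin (pi * d))\<^sup>2 * (1 / d\<^sup>2 + 1 / (1 - d)\<^sup>2) / pi\<^sup>2"
      by (simp add: field_simps)
    moreover have "8 / pi\<^sup>2 \<le> (sin (pi * d))\<^sup>2 * (1 / d\<^sup>2 + 1 / (1 - d)\<^sup>2) / pi\<^sup>2"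
      using sin_pi_sq_inverse_sq_sum_ge_8[OF \<open>0 < d\<close> d(2)] by (intro divide_right_mono) auto
    ultimately show ?thesis by linarith
  qed
qed

lemma sum_fejer_weight_interval:
  fixes w :: real and c :: int
  assumes "M \<ge> 1"
  shows "(\<Sum>n\<in>{c..<c + int M}. fejer_weight M w n) = 1"
  using sum_lessThan_periodic_interval[of "fejer_weight M w" M c] fejer_weight_periodic[OF assms]
    sum_fejer_weight[OF assms] by simp

text \<open>The probability that phase estimation with \<open>M\<close> points and peak \<open>w\<close> returns an outcome
  satisfying \<open>P\<close>.\<close>

definition fejer_mass :: "nat \<Rightarrow> real \<Rightarrow> (int \<Rightarrow> bool) \<Rightarrow> real" where
  "fejer_mass M w P = (\<Sum>y<M. if P (int y) then fejer_weight M w (int y) else 0)"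

lemma fejer_mass_interval:
  assumes "M \<ge> 1" "\<And>n. P (n + int M) = P n"
  shows "fejer_mass M w P = (\<Sum>n\<in>{c..<c + int M}. if P n then fejer_weight M w n else 0)"
  unfolding fejer_mass_def
  by (rule sum_lessThan_periodic_interval) (simp add: assms(2) fejer_weight_periodic[OF assms(1)])

lemma fejer_mass_le_one:
  assumes "M \<ge> 1" "\<And>n. P (n + int M) = P n"
  shows "fejer_mass M w P \<le> 1"
proof -
  have "fejer_mass M w P \<le> (\<Sum>n\<in>{0..<0 + int M}. fejer_weight M w n)"
    unfolding fejer_mass_interval[where P = P and c = 0, OF assms]
    by (intro sum_mono) (simp add: fejer_weight_nonneg)
  then show ?thesis using sum_fejer_weight_interval[OF assms(1), of w 0] by simp
qed

lemma fejer_mass_near_ge: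
  assumes M: "M \<ge> 1" and per: "\<And>n. P (n + int M) = P n"
    and near: "\<And>n. \<bar>real_of_int n - w\<bar> \<le> 1 \<Longrightarrow> P n"
  shows "8 / pi\<^sup>2 \<le> fejer_mass M w P"
proof -
  let ?H = "\<lambda>n. if P n then fejer_weight M w n else 0"
  have P_floor: "P \<lfloor>w\<rfloor>" and P_ceiling: "P (\<lfloor>w\<rfloor> + 1)"
    by (intro near; linarith)+
  show ?thesis
  proof (cases "M = 1")
    case True
    then have "{\<lfloor>w\<rfloor>..<\<lfloor>w\<rfloor> + int M} = {\<lfloor>w\<rfloor>}" by auto
    then have "fejer_mass M w P = 1"
      using fejer_mass_interval[where P = P, OF M per, of w "\<lfloor>w\<rfloor>"]
        sum_fejer_weight_interval[OF M, of w "\<lfloor>w\<rfloor>"] P_floor by simp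
    then show ?thesis
      using pi_gt3 power_mono[of 3 pi 2] by simp
  next
    case False
    then have "{\<lfloor>w\<rfloor>, \<lfloor>w\<rfloor> + 1} \<subseteq> {\<lfloor>w\<rfloor>..<\<lfloor>w\<rfloor> + int M}" using M by auto
    then have "(\<Sum>n\<in>{\<lfloor>w\<rfloor>, \<lfloor>w\<rfloor> + 1}. ?H n) \<le> (\<Sum>n\<in>{\<lfloor>w\<rfloor>..<\<lfloor>w\<rfloor> + int M}. ?H n)"
      by (intro sum_mono2) (auto simp: fejer_weight_nonneg)
    then show ?thesis
      using fejer_mass_interval[where P = P, OF M per, of w "\<lfloor>w\<rfloor>"] fejer_weight_two_nearest_ge[OF M, of w]
        P_floor P_ceiling by simp
  qed
qed

lemma fejer_mass_exact:
  assumes M: "M \<ge> 1" and per: "\<And>n. P (n + int M) = P n" and "P m"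
  shows "fejer_mass M (real_of_int m) P = 1"
proof -
  let ?H = "\<lambda>n. if P n then fejer_weight M (real_of_int m) n else 0"
  have "?H m = 1"
    using \<open>P m\<close> fejer_zero[OF M] by (simp add: fejer_weight_def)
  then have "1 \<le> (\<Sum>n\<in>{m..<m + int M}. ?H n)"
    using member_le_sum[of m "{m..<m + int M}" ?H] M by (simp add: fejer_weight_nonneg)
  then show ?thesis
    using fejer_mass_interval[where P = P, OF M per, of "real_of_int m" m]
      fejer_mass_le_one[where P = P, OF M per, of "real_of_int m"] by linarith
qed

lemma sum_fejer_weight_far_less:
  assumes M: "M \<ge> 1" and k: "2 \<le> k" and "finite N"
    and N: "\<And>n. n \<in> N \<Longrightarrow> \<bar>real_of_int n - w\<bar> \<le> real M / 2"
  shows "(\<Sum>n\<in>{n\<in>N. real k < \<bar>real_of_int n - w\<bar>}. fejer_weight M w n) < 1 / (2 * (real k - 1))"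
proof -
  let ?R = "\<lambda>n. 1 / (real_of_int n - w)\<^sup>2"
  define N_right where "N_right = {n\<in>N. real k < real_of_int n - w}"
  define N_left where "N_left = {n\<in>N. real k < w - real_of_int n}"
  have far: "{n\<in>N. real k < \<bar>real_of_int n - w\<bar>} = N_right \<union> N_left"
    by (auto simp: N_right_def N_left_def)
  have "(\<Sum>n\<in>N_right \<union> N_left. fejer_weight M w n) \<le> (\<Sum>n\<in>N_right \<union> N_left. ?R n / 4)"
  proof (intro sum_mono)
    fix n assume "n \<in> N_right \<union> N_left"
    then have "real k < \<bar>real_of_int n - w\<bar>" "\<bar>real_of_int n - w\<bar> \<le> real M / 2"
      using N by (auto simp: N_right_def N_left_def)
    then show "fejer_weight M w n \<le> ?R n / 4"
      using fejer_weight_le_inverse_sq[OF M, of n w] of_nat_0_le_iff[of k] by (simp add: mult.commute)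
  qed
  also have "\<dots> = (\<Sum>n\<in>N_right. ?R n) / 4 + (\<Sum>n\<in>N_left. 1 / (real_of_int (- n) - (- w))\<^sup>2) / 4"
    using \<open>finite N\<close> by (subst sum.union_disjoint)
      (auto simp: N_right_def N_left_def sum_divide_distrib power2_commute[of _ w])
  also have "\<dots> < 1 / (real k - 1) / 4 + 1 / (real k - 1) / 4"
  proof (intro add_strict_mono divide_strict_right_mono)
    show "(\<Sum>n\<in>N_right. ?R n) < 1 / (real k - 1)"
      using sum_inverse_sq_dist_less[of N_right id k w] \<open>finite N\<close> k by (simp add: N_right_def)
    show "(\<Sum>n\<in>N_left. 1 / (real_of_int (- n) - (- w))\<^sup>2) < 1 / (real k - 1)"
      using sum_inverse_sq_dist_less[of N_left uminus k "- w"] \<open>finite N\<close> k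
      by (simp add: N_left_def inj_on_def)
  qed auto
  also have "1 / (real k - 1) / 4 + 1 / (real k - 1) / 4 = 1 / (2 * (real k - 1))"
    using k by (simp add: field_simps)
  finally show ?thesis unfolding far .
qed

lemma fejer_mass_near_gt:
  assumes M: "M \<ge> 1" and k: "2 \<le> k" and per: "\<And>n. P (n + int M) = P n"
    and near: "\<And>n. \<bar>real_of_int n - w\<bar> \<le> real k \<Longrightarrow> P n"
  shows "1 - 1 / (2 * (real k - 1)) < fejer_mass M w P"
proof -
  txt \<open>Sum over the \<open>M\<close> consecutive integers centred at \<open>w\<close>, where the Jordan bound applies.\<close>
  define c where "c = \<lfloor>w - real M / 2\<rfloor> + 1"
  let ?N = "{c..<c + int M}"
  let ?far = "\<lambda>n. real k < \<bar>real_of_int n - w\<bar>"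
  have centered: "\<bar>real_of_int n - w\<bar> \<le> real M / 2" if "n \<in> ?N" for n
  proof -
    have "real_of_int \<lfloor>w - real M / 2\<rfloor> \<le> w - real M / 2"
      "w - real M / 2 < real_of_int \<lfloor>w - real M / 2\<rfloor> + 1"
      by linarith+
    moreover have "real_of_int c \<le> real_of_int n" "real_of_int n + 1 \<le> real_of_int c + real M"
      using that by simp_all
    moreover have "real_of_int c = real_of_int \<lfloor>w - real M / 2\<rfloor> + 1"
      by (simp add: c_def)
    ultimately show ?thesis unfolding abs_le_iff by linarith
  qed
  have "1 = (\<Sum>n\<in>?N. fejer_weight M w n)"
    using sum_fejer_weight_interval[OF M, of w c] by simp
  also have "\<dots> = (\<Sum>n\<in>?N. (if ?far n then fejer_weight M w n else 0)
                             + (if ?far n then 0 else fejer_weight M w n))"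
    by (intro sum.cong) auto
  also have "\<dots> = (\<Sum>n\<in>?N. if ?far n then fejer_weight M w n else 0)
                  + (\<Sum>n\<in>?N. if ?far n then 0 else fejer_weight M w n)"
    by (rule sum.distrib)
  also have "(\<Sum>n\<in>?N. if ?far n then fejer_weight M w n else 0)
           = (\<Sum>n\<in>{n\<in>?N. ?far n}. fejer_weight M w n)"
    by (rule sum.inter_filter[symmetric]) simp
  also have "(\<Sum>n\<in>?N. if ?far n then 0 else fejer_weight M w n)
           \<le> (\<Sum>n\<in>?N. if P n then fejer_weight M w n else 0)"
    using near by (intro sum_mono) (auto simp: fejer_weight_nonneg)
  also have "\<dots> = fejer_mass M w P"
    by (rule fejer_mass_interval[where P = P, OF M per, symmetric])
  finally show ?thesis
    using sum_fejer_weight_far_less[OF M k _ centered, of ?N] by simp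
qed

section \<open>The Grover iterate on the good and bad parts of \<Psi>\<close>

lemma cnj_mult_self: "cnj z * z = (complex_of_real (cmod z))\<^sup>2"
  using complex_norm_square[of z] by (simp add: mult.commute)

lemma Psi_eq_column: "finite B \<Longrightarrow> 0 \<in> B \<Longrightarrow> Psi B A x = A x 0"
  by (simp add: Psi_def mat_app_def ket_def if_distrib[of "\<lambda>t. A x _ * t"] cong: if_cong)

lemma unitary_on_mat_app_adjoint:
  assumes "finite B" "unitary_on B A" "x \<in> B"
  shows "mat_app B A (mat_app B (Defs.adjoint A) u) x = u x"
proof -
  have "mat_app B A (mat_app B (Defs.adjoint A) u) x = (\<Sum>z\<in>B. (\<Sum>y\<in>B. A x y * cnj (A z y)) * u z)"
    unfolding mat_app_def Defs.adjoint_def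
    by (simp add: sum_distrib_left sum_distrib_right mult.assoc) (rule sum.swap)
  also have "\<dots> = (\<Sum>z\<in>B. (if x = z then 1 else 0) * u z)"
    using assms(2,3) by (intro sum.cong) (auto simp: unitary_on_def)
  also have "\<dots> = u x"
    using assms(1,3) by (simp add: if_distrib[of "\<lambda>t. t * u _"] cong: if_cong)
  finally show ?thesis .
qed

lemma Q_op_eq_reflection:
  assumes "finite B" "0 \<in> B" "unitary_on B A" "x \<in> B"
  shows "Q_op B A \<chi> v x = 2 * inner_on B (Psi B A) (S_chi \<chi> v) * Psi B A x - S_chi \<chi> v x"
proof -
  define u where "u = mat_app B (Defs.adjoint A) (S_chi \<chi> v)"
  have "S_zero u = (\<lambda>y. u y - (if y = 0 then 2 * u 0 else 0))"
    by (auto simp: S_zero_def)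
  then have "mat_app B A (S_zero u) x = mat_app B A u x - 2 * A x 0 * u 0"
    using assms(1,2)
    by (simp add: mat_app_def right_diff_distrib sum_subtractf if_distrib[of "\<lambda>t. A x _ * t"] cong: if_cong)
  moreover have "mat_app B A u x = S_chi \<chi> v x"
    unfolding u_def using assms(1,3,4) by (rule unitary_on_mat_app_adjoint)
  moreover have "u 0 = inner_on B (Psi B A) (S_chi \<chi> v)"
    using assms(1,2) by (simp add: u_def mat_app_def Defs.adjoint_def inner_on_def Psi_eq_column)
  ultimately show ?thesis
    using assms(1,2) by (simp add: Q_op_def u_def Psi_eq_column)
qed

definition bad_part :: "(int \<Rightarrow> nat) \<Rightarrow> (nat \<Rightarrow> complex) \<Rightarrow> nat \<Rightarrow> complex" where
  "bad_part \<chi> v = (\<lambda>x. if \<chi> (int x) = 1 then 0 else v x)"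

lemma good_plus_bad_part: "good_part \<chi> v x + bad_part \<chi> v x = v x"
  by (simp add: good_part_def bad_part_def)

lemma S_chi_eq_bad_minus_good:
  assumes "\<forall>x. \<chi> x \<in> {0, 1}"
  shows "S_chi \<chi> v x = bad_part \<chi> v x - good_part \<chi> v x"
  using assms[rule_format, of "int x"] by (auto simp: S_chi_def good_part_def bad_part_def)

lemma amp_eq_sum_good: "amp B A \<chi> = (\<Sum>x\<in>B. (cmod (good_part \<chi> (Psi B A) x))\<^sup>2)"
  by (simp add: amp_def inner_on_def cnj_mult_self flip: of_real_sum)

lemma sum_cmod_Psi_sq:
  assumes "finite B" "0 \<in> B" "unitary_on B A"
  shows "(\<Sum>x\<in>B. (cmod (Psi B A x))\<^sup>2) = 1"
proof -
  have "(\<Sum>x\<in>B. cnj (A x 0) * A x 0) = 1"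
    using assms(2,3) by (simp add: unitary_on_def)
  then have "complex_of_real (\<Sum>x\<in>B. (cmod (A x 0))\<^sup>2) = 1"
    by (simp add: cnj_mult_self)
  then show ?thesis
    using assms(1,2) by (simp add: Psi_eq_column del: of_real_sum)
qed

lemma sum_cmod_bad_sq:
  assumes "finite B" "0 \<in> B" "unitary_on B A"
  shows "(\<Sum>x\<in>B. (cmod (bad_part \<chi> (Psi B A) x))\<^sup>2) = 1 - amp B A \<chi>"
proof -
  have "(cmod (Psi B A x))\<^sup>2 = (cmod (good_part \<chi> (Psi B A) x))\<^sup>2 + (cmod (bad_part \<chi> (Psi B A) x))\<^sup>2" for x
    by (simp add: good_part_def bad_part_def)
  then show ?thesis
    using sum_cmod_Psi_sq[OF assms] by (simp add: amp_eq_sum_good sum.distrib)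
qed

lemma amp_bounds:
  assumes "finite B" "0 \<in> B" "unitary_on B A"
  shows "0 \<le> amp B A \<chi>" "amp B A \<chi> \<le> 1"
  using sum_cmod_bad_sq[OF assms, of \<chi>] sum_nonneg[of B "\<lambda>x. (cmod (bad_part \<chi> (Psi B A) x))\<^sup>2"]
  by (auto simp: amp_eq_sum_good intro: sum_nonneg)

lemma inner_on_Psi_good:
  "inner_on B (Psi B A) (good_part \<chi> (Psi B A)) = complex_of_real (amp B A \<chi>)"
  by (auto simp: amp_eq_sum_good inner_on_def good_part_def cnj_mult_self intro!: sum.cong)

lemma inner_on_Psi_bad:
  assumes "finite B" "0 \<in> B" "unitary_on B A"
  shows "inner_on B (Psi B A) (bad_part \<chi> (Psi B A)) = complex_of_real (1 - amp B A \<chi>)"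
  unfolding sum_cmod_bad_sq[OF assms, symmetric]
  by (auto simp: inner_on_def bad_part_def cnj_mult_self intro!: sum.cong)

lemma Q_op_on_span:
  assumes B: "finite B" "0 \<in> B" and \<chi>: "\<forall>x. \<chi> x \<in> {0, 1}" and U: "unitary_on B A"
    and v: "\<And>z. z \<in> B \<Longrightarrow> v z = \<alpha> * good_part \<chi> (Psi B A) z + \<beta> * bad_part \<chi> (Psi B A) z"
    and "x \<in> B"
  defines "a \<equiv> complex_of_real (amp B A \<chi>)"
  shows "Q_op B A \<chi> v x = ((1 - 2 * a) * \<alpha> + 2 * (1 - a) * \<beta>) * good_part \<chi> (Psi B A) x
                        + ((1 - 2 * a) * \<beta> - 2 * a * \<alpha>) * bad_part \<chi> (Psi B A) x"
proof -
  let ?g = "good_part \<chi> (Psi B A)" and ?b = "bad_part \<chi> (Psi B A)"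
  have S: "S_chi \<chi> v z = \<beta> * ?b z - \<alpha> * ?g z" if "z \<in> B" for z
    using v[OF that] by (simp add: S_chi_eq_bad_minus_good[OF \<chi>] good_part_def bad_part_def)
  have "inner_on B (Psi B A) (S_chi \<chi> v) = \<beta> * inner_on B (Psi B A) ?b - \<alpha> * inner_on B (Psi B A) ?g"
    by (simp add: inner_on_def S sum_subtractf sum_distrib_left algebra_simps)
  also have "\<dots> = \<beta> * (1 - a) - \<alpha> * a"
    by (simp add: inner_on_Psi_good inner_on_Psi_bad[OF B U] a_def)
  finally have "Q_op B A \<chi> v x = 2 * (\<beta> * (1 - a) - \<alpha> * a) * (?g x + ?b x) - (\<beta> * ?b x - \<alpha> * ?g x)"
    using Q_op_eq_reflection[OF B U \<open>x \<in> B\<close>, of \<chi> v] S[OF \<open>x \<in> B\<close>]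
    by (simp only: good_plus_bad_part)
  then show ?thesis
    by (simp add: algebra_simps)
qed

text \<open>The coefficients of \<open>Q\<^sup>j \<Psi>\<close> on the good and bad parts of \<open>\<Psi>\<close>. By
  \<open>grover_coeffs_sin_cos\<close> they equal \<open>sin ((2j+1)\<theta>) / sin \<theta>\<close> and
  \<open>cos ((2j+1)\<theta>) / cos \<theta>\<close>; the recursive form avoids dividing by zero when \<open>a \<in> {0, 1}\<close>.\<close>

fun grover_coeffs :: "real \<Rightarrow> nat \<Rightarrow> real \<times> real" where
  "grover_coeffs a 0 = (1, 1)"
| "grover_coeffs a (Suc j) =
     ((1 - 2 * a) * fst (grover_coeffs a j) + 2 * (1 - a) * snd (grover_coeffs a j),
      (1 - 2 * a) * snd (grover_coeffs a j) - 2 * a * fst (grover_coeffs a j))"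

lemma Q_op_power_Psi:
  assumes B: "finite B" "0 \<in> B" and \<chi>: "\<forall>x. \<chi> x \<in> {0, 1}" and U: "unitary_on B A"
    and "x \<in> B"
  defines "c \<equiv> grover_coeffs (amp B A \<chi>)"
  shows "(Q_op B A \<chi> ^^ j) (\<lambda>z. \<kappa> * Psi B A z) x
       = \<kappa> * (complex_of_real (fst (c j)) * good_part \<chi> (Psi B A) x
              + complex_of_real (snd (c j)) * bad_part \<chi> (Psi B A) x)"
  using \<open>x \<in> B\<close>
proof (induction j arbitrary: x)
  case 0
  then show ?case by (simp add: c_def distrib_left[symmetric] good_plus_bad_part)
next
  case (Suc j)
  have "(Q_op B A \<chi> ^^ j) (\<lambda>z. \<kappa> * Psi B A z) z
      = (\<kappa> * fst (c j)) * good_part \<chi> (Psi B A) z + (\<kappa> * snd (c j)) * bad_part \<chi> (Psi B A) z"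
    if "z \<in> B" for z
    using Suc.IH[OF that] by (simp add: algebra_simps)
  from Q_op_on_span[OF B \<chi> U this Suc.prems] show ?case
    by (simp add: c_def algebra_simps)
qed

lemma grover_coeffs_sin_cos:
  assumes "a = (sin t)\<^sup>2"
  shows "sin t * fst (grover_coeffs a j) = sin ((2 * real j + 1) * t)
       \<and> cos t * snd (grover_coeffs a j) = cos ((2 * real j + 1) * t)"
proof (induction j)
  case (Suc j)
  define s where "s = fst (grover_coeffs a j)"
  define c where "c = snd (grover_coeffs a j)"
  define u where "u = (2 * real j + 1) * t"
  have IH: "sin t * s = sin u" "cos t * c = cos u"
    using Suc by (simp_all add: s_def c_def u_def)
  have u_Suc: "(2 * real (Suc j) + 1) * t = u + 2 * t"
    by (simp add: u_def algebra_simps)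
  have pythagoras: "(sin t)\<^sup>2 + (cos t)\<^sup>2 = 1" by simp
  have "sin (u + 2 * t) = (sin t * s) * ((cos t)\<^sup>2 - (sin t)\<^sup>2) + (cos t * c) * (2 * sin t * cos t)"
    by (simp add: sin_add IH sin_double cos_double)
  then have "sin t * ((1 - 2 * a) * s + 2 * (1 - a) * c) = sin (u + 2 * t)"
    unfolding assms using pythagoras by algebra
  moreover have "cos (u + 2 * t) = (cos t * c) * ((cos t)\<^sup>2 - (sin t)\<^sup>2) - (sin t * s) * (2 * sin t * cos t)"
    by (simp add: cos_add IH sin_double cos_double)
  then have "cos t * ((1 - 2 * a) * c - 2 * a * s) = cos (u + 2 * t)"
    unfolding assms using pythagoras by algebra
  ultimately show ?case
    unfolding u_Suc by (simp add: s_def c_def)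
qed simp

section \<open>The output distribution of amplitude estimation\<close>

lemma QFT_eq_cis: "QFT M y x = cis (2 * pi * real x * real y / real M) / complex_of_real (sqrt (real M))"
proof -
  have "exp (2 * complex_of_real pi * \<i> * of_nat x * of_nat y / of_nat M)
      = cis (2 * pi * real x * real y / real M)"
    unfolding cis_conv_exp by (rule arg_cong[where f = exp]) (simp add: algebra_simps)
  then show ?thesis by (simp add: QFT_def)
qed

lemma QFT_init_state:
  assumes "M \<ge> 1"
  shows "on_first M (QFT M) (init_state B A) (j, x) = Psi B A x / complex_of_real (sqrt (real M))"
proof -
  have "on_first M (QFT M) (init_state B A) (j, x) = (\<Sum>l<M. QFT M j l * (ket 0 l * Psi B A x))"
    by (simp add: on_first_def init_state_def)
  also have "\<dots> = (\<Sum>l<M. if l = 0 then QFT M j 0 * Psi B A x else 0)"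
    by (intro sum.cong) (auto simp: ket_def)
  also have "\<dots> = QFT M j 0 * Psi B A x"
    using assms by simp
  finally show ?thesis by (simp add: QFT_eq_cis)
qed

lemma final_state_eq:
  fixes y :: nat
  assumes B: "finite B" "0 \<in> B" and \<chi>: "\<forall>x. \<chi> x \<in> {0, 1}" and U: "unitary_on B A"
    and M: "M \<ge> 1" and "x \<in> B"
  defines "c \<equiv> grover_coeffs (amp B A \<chi>)"
    and "e \<equiv> \<lambda>j. cis (- (2 * pi * real j * real y / real M))"
  shows "final_state B A \<chi> M (y, x)
       = ((\<Sum>j<M. e j * complex_of_real (fst (c j))) * good_part \<chi> (Psi B A) x
        + (\<Sum>j<M. e j * complex_of_real (snd (c j))) * bad_part \<chi> (Psi B A) x) / of_nat M"
proof -
  let ?\<kappa> = "1 / complex_of_real (sqrt (real M))"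
  have Lambda_eq: "Lambda (Q_op B A \<chi>) (on_first M (QFT M) (init_state B A)) (j, x)
      = ?\<kappa> * (complex_of_real (fst (c j)) * good_part \<chi> (Psi B A) x
              + complex_of_real (snd (c j)) * bad_part \<chi> (Psi B A) x)" for j
    using Q_op_power_Psi[OF B \<chi> U \<open>x \<in> B\<close>, of j ?\<kappa>]
    by (simp add: Lambda_def QFT_init_state[OF M] c_def)
  have "complex_of_real (sqrt (real M)) * complex_of_real (sqrt (real M)) = of_nat M"
    by (simp flip: of_real_mult)
  then have QFT_\<kappa>: "cnj (QFT M j y) * ?\<kappa> = e j / of_nat M" for j
    by (simp add: QFT_eq_cis cis_cnj e_def algebra_simps)
  have "final_state B A \<chi> M (y, x)
      = (\<Sum>j<M. cnj (QFT M j y) * Lambda (Q_op B A \<chi>) (on_first M (QFT M) (init_state B A)) (j, x))"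
    by (simp add: final_state_def on_first_def QFT_inv_def Defs.adjoint_def)
  also have "\<dots> = (\<Sum>j<M. (e j * complex_of_real (fst (c j)) * good_part \<chi> (Psi B A) x
                          + e j * complex_of_real (snd (c j)) * bad_part \<chi> (Psi B A) x) / of_nat M)"
    unfolding Lambda_eq mult.assoc[symmetric] QFT_\<kappa> by (simp add: algebra_simps add_divide_distrib)
  finally show ?thesis
    by (simp add: sum_divide_distrib[symmetric] sum.distrib sum_distrib_right)
qed

lemma meas_prob_eq:
  fixes y :: nat
  assumes B: "finite B" "0 \<in> B" and \<chi>: "\<forall>x. \<chi> x \<in> {0, 1}" and U: "unitary_on B A"
    and M: "M \<ge> 1"
  defines "c \<equiv> grover_coeffs (amp B A \<chi>)"
    and "e \<equiv> \<lambda>j. cis (- (2 * pi * real j * real y / real M))"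
  shows "meas_prob B A \<chi> M y
       = ((cmod (\<Sum>j<M. e j * complex_of_real (fst (c j))))\<^sup>2 * amp B A \<chi>
        + (cmod (\<Sum>j<M. e j * complex_of_real (snd (c j))))\<^sup>2 * (1 - amp B A \<chi>)) / (real M)\<^sup>2"
proof -
  let ?S1 = "\<Sum>j<M. e j * complex_of_real (fst (c j))"
    and ?S0 = "\<Sum>j<M. e j * complex_of_real (snd (c j))"
    and ?g = "good_part \<chi> (Psi B A)" and ?b = "bad_part \<chi> (Psi B A)"
  have "(cmod (final_state B A \<chi> M (y, x)))\<^sup>2
      = ((cmod ?S1)\<^sup>2 * (cmod (?g x))\<^sup>2 + (cmod ?S0)\<^sup>2 * (cmod (?b x))\<^sup>2) / (real M)\<^sup>2"
    if "x \<in> B" for x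
    unfolding final_state_eq[OF B \<chi> U M that] c_def e_def
    by (simp add: good_part_def bad_part_def norm_mult norm_divide power_mult_distrib power_divide)
  then have "meas_prob B A \<chi> M y
      = (\<Sum>x\<in>B. ((cmod ?S1)\<^sup>2 * (cmod (?g x))\<^sup>2 + (cmod ?S0)\<^sup>2 * (cmod (?b x))\<^sup>2) / (real M)\<^sup>2)"
    by (simp add: meas_prob_def)
  also have "\<dots> = ((cmod ?S1)\<^sup>2 * (\<Sum>x\<in>B. (cmod (?g x))\<^sup>2)
                   + (cmod ?S0)\<^sup>2 * (\<Sum>x\<in>B. (cmod (?b x))\<^sup>2)) / (real M)\<^sup>2"
    by (simp add: sum_distrib_left sum.distrib flip: sum_divide_distrib)
  finally show ?thesis
    by (simp add: amp_eq_sum_good[symmetric] sum_cmod_bad_sq[OF B U])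
qed

lemma cmod_sum_sin_sq_plus_cmod_sum_cos_sq:
  "(cmod (\<Sum>j\<in>J. cis (u j) * complex_of_real (sin (v j))))\<^sup>2
 + (cmod (\<Sum>j\<in>J. cis (u j) * complex_of_real (cos (v j))))\<^sup>2
 = ((cmod (\<Sum>j\<in>J. cis (u j + v j)))\<^sup>2 + (cmod (\<Sum>j\<in>J. cis (u j - v j)))\<^sup>2) / 2"
proof -
  define X where "X = (\<Sum>j\<in>J. cis (u j) * complex_of_real (sin (v j)))"
  define Y where "Y = (\<Sum>j\<in>J. cis (u j) * complex_of_real (cos (v j)))"
  have "cis (u j + v j) = cis (u j) * complex_of_real (cos (v j)) + \<i> * (cis (u j) * complex_of_real (sin (v j)))"
    "cis (u j - v j) = cis (u j) * complex_of_real (cos (v j)) - \<i> * (cis (u j) * complex_of_real (sin (v j)))"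
    for j
    by (simp_all add: complex_eq_iff cos_add sin_add cos_diff sin_diff algebra_simps)
  then have "(\<Sum>j\<in>J. cis (u j + v j)) = Y + \<i> * X" "(\<Sum>j\<in>J. cis (u j - v j)) = Y - \<i> * X"
    by (simp_all add: X_def Y_def sum.distrib sum_subtractf sum_distrib_left)
  moreover have "(cmod (p + q))\<^sup>2 + (cmod (p - q))\<^sup>2 = 2 * (cmod p)\<^sup>2 + 2 * (cmod q)\<^sup>2" for p q
    unfolding cmod_power2 by (simp add: power2_eq_square algebra_simps)
  ultimately show ?thesis
    by (simp add: X_def[symmetric] Y_def[symmetric] norm_mult)
qed

lemma cmod_sum_grover_coeffs_sq:
  assumes "0 \<le> a" "a \<le> 1"
  defines "\<theta> \<equiv> arcsin (sqrt a)"
  shows "(cmod (\<Sum>j<M. cis (u j) * complex_of_real (fst (grover_coeffs a j))))\<^sup>2 * a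
       + (cmod (\<Sum>j<M. cis (u j) * complex_of_real (snd (grover_coeffs a j))))\<^sup>2 * (1 - a)
       = ((cmod (\<Sum>j<M. cis (u j + (2 * real j + 1) * \<theta>)))\<^sup>2
        + (cmod (\<Sum>j<M. cis (u j - (2 * real j + 1) * \<theta>)))\<^sup>2) / 2"
proof -
  let ?c = "grover_coeffs a" and ?v = "\<lambda>j. (2 * real j + 1) * \<theta>"
  have a_eq: "a = (sin \<theta>)\<^sup>2" and cos_\<theta>: "(cos \<theta>)\<^sup>2 = 1 - a"
    using sin_cos_arcsin_sqrt[OF assms(1,2)] assms(1,2) by (simp_all add: \<theta>_def)
  have pointwise:
    "cis (u j) * complex_of_real (fst (?c j)) * complex_of_real (sin \<theta>) = cis (u j) * complex_of_real (sin (?v j))"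
    "cis (u j) * complex_of_real (snd (?c j)) * complex_of_real (cos \<theta>) = cis (u j) * complex_of_real (cos (?v j))"
    for j
    using grover_coeffs_sin_cos[OF a_eq, of j] by (simp_all add: algebra_simps flip: of_real_mult)
  define S1 where "S1 = (\<Sum>j<M. cis (u j) * complex_of_real (fst (?c j)))"
  define S0 where "S0 = (\<Sum>j<M. cis (u j) * complex_of_real (snd (?c j)))"
  have "S1 * complex_of_real (sin \<theta>) = (\<Sum>j<M. cis (u j) * complex_of_real (sin (?v j)))"
    "S0 * complex_of_real (cos \<theta>) = (\<Sum>j<M. cis (u j) * complex_of_real (cos (?v j)))"
    unfolding S1_def S0_def sum_distrib_right pointwise by simp_all
  moreover have "(cmod (S1 * complex_of_real (sin \<theta>)))\<^sup>2 = (cmod S1)\<^sup>2 * a"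
    "(cmod (S0 * complex_of_real (cos \<theta>)))\<^sup>2 = (cmod S0)\<^sup>2 * (1 - a)"
    by (simp_all add: norm_mult power_mult_distrib a_eq cos_\<theta>)
  ultimately have "(cmod S1)\<^sup>2 * a + (cmod S0)\<^sup>2 * (1 - a)
     = (cmod (\<Sum>j<M. cis (u j) * complex_of_real (sin (?v j))))\<^sup>2
     + (cmod (\<Sum>j<M. cis (u j) * complex_of_real (cos (?v j))))\<^sup>2"
    by simp
  also have "\<dots> = ((cmod (\<Sum>j<M. cis (u j + ?v j)))\<^sup>2 + (cmod (\<Sum>j<M. cis (u j - ?v j)))\<^sup>2) / 2"
    by (rule cmod_sum_sin_sq_plus_cmod_sum_cos_sq)
  finally show ?thesis by (simp add: S1_def S0_def)
qed

lemma meas_prob_eq_fejer_weight: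
  fixes y :: nat
  assumes B: "finite B" "0 \<in> B" and \<chi>: "\<forall>x. \<chi> x \<in> {0, 1}" and U: "unitary_on B A"
    and M: "M \<ge> 1"
  defines "w \<equiv> real M * arcsin (sqrt (amp B A \<chi>)) / pi"
  shows "meas_prob B A \<chi> M y = (fejer_weight M w (int y) + fejer_weight M (- w) (int y)) / 2"
proof -
  define a where "a = amp B A \<chi>"
  define \<theta> where "\<theta> = arcsin (sqrt a)"
  define u where "u j = - (2 * pi * real j * real y / real M)" for j
  have Mp: "real M > 0" using M by simp
  have sums: "(\<Sum>j<M. cis (u j + (2 * real j + 1) * \<theta>))
      = (\<Sum>j<M. cis (\<theta> + real j * (2 * \<theta> - 2 * pi * real y / real M)))"
    "(\<Sum>j<M. cis (u j - (2 * real j + 1) * \<theta>))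
      = (\<Sum>j<M. cis (- \<theta> + real j * (- 2 * \<theta> - 2 * pi * real y / real M)))"
    using Mp by (auto simp: u_def field_simps intro!: sum.cong arg_cong[where f = cis])
  have "2 * pi * (real_of_int (int y) - w) / real M = - (2 * \<theta> - 2 * pi * real y / real M)"
    "2 * pi * (real_of_int (int y) - - w) / real M = - (- 2 * \<theta> - 2 * pi * real y / real M)"
    using Mp by (simp_all add: w_def \<theta>_def a_def field_simps)
  then have weights: "fejer M (2 * \<theta> - 2 * pi * real y / real M) = fejer_weight M w (int y)"
    "fejer M (- 2 * \<theta> - 2 * pi * real y / real M) = fejer_weight M (- w) (int y)"
    by (simp_all only: fejer_weight_def fejer_minus)
  have "(cmod (\<Sum>j<M. cis (u j) * complex_of_real (fst (grover_coeffs a j))))\<^sup>2 * a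
      + (cmod (\<Sum>j<M. cis (u j) * complex_of_real (snd (grover_coeffs a j))))\<^sup>2 * (1 - a)
      = ((cmod (\<Sum>j<M. cis (u j + (2 * real j + 1) * \<theta>)))\<^sup>2
       + (cmod (\<Sum>j<M. cis (u j - (2 * real j + 1) * \<theta>)))\<^sup>2) / 2"
    using amp_bounds[OF B U] unfolding \<theta>_def a_def by (rule cmod_sum_grover_coeffs_sq)
  also have "\<dots> = ((real M)\<^sup>2 * fejer_weight M w (int y) + (real M)\<^sup>2 * fejer_weight M (- w) (int y)) / 2"
    unfolding sums cmod_sum_cis_arith_sq weights ..
  also have "\<dots> = (real M)\<^sup>2 * ((fejer_weight M w (int y) + fejer_weight M (- w) (int y)) / 2)"
    by (simp add: algebra_simps)
  moreover have "meas_prob B A \<chi> M y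
      = ((cmod (\<Sum>j<M. cis (u j) * complex_of_real (fst (grover_coeffs a j))))\<^sup>2 * a
       + (cmod (\<Sum>j<M. cis (u j) * complex_of_real (snd (grover_coeffs a j))))\<^sup>2 * (1 - a)) / (real M)\<^sup>2"
    unfolding u_def a_def by (rule meas_prob_eq[OF B \<chi> U M])
  ultimately show ?thesis
    using Mp by simp
qed

lemma est_prob_eq_fejer_mass:
  fixes P :: "real \<Rightarrow> bool"
  assumes B: "finite B" "0 \<in> B" and \<chi>: "\<forall>x. \<chi> x \<in> {0, 1}" and U: "unitary_on B A"
    and M: "M \<ge> 1"
  defines "w \<equiv> real M * arcsin (sqrt (amp B A \<chi>)) / pi"
    and "P' \<equiv> \<lambda>n. P ((sin (pi * real_of_int n / real M))\<^sup>2)"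
  shows "est_prob B A \<chi> M P = fejer_mass M w P' / 2 + fejer_mass M (- w) P' / 2"
proof -
  have "est_prob B A \<chi> M P = (\<Sum>y<M. if P (est_output M y) then meas_prob B A \<chi> M y else 0)"
    unfolding est_prob_def using sum.inter_filter[of "{..<M}" "meas_prob B A \<chi> M" "\<lambda>y. P (est_output M y)"]
    by simp
  also have "\<dots> = (\<Sum>y<M. (if P' (int y) then fejer_weight M w (int y) else 0) / 2
                       + (if P' (int y) then fejer_weight M (- w) (int y) else 0) / 2)"
    by (intro sum.cong refl)
      (simp add: meas_prob_eq_fejer_weight[OF B \<chi> U M] est_output_def P'_def w_def add_divide_distrib)
  finally show ?thesis
    by (simp add: fejer_mass_def sum.distrib flip: sum_divide_distrib)
qed

definition amp_error :: "nat \<Rightarrow> real \<Rightarrow> real \<Rightarrow> real" where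
  "amp_error M a k = 2 * pi * k * sqrt (a * (1 - a)) / real M + k\<^sup>2 * pi\<^sup>2 / (real M)\<^sup>2"

lemma sin_sq_near_amp:
  fixes a k :: real and n :: int and M :: nat
  defines "w \<equiv> real M * arcsin (sqrt a) / pi"
  assumes a: "0 \<le> a" "a \<le> 1" and M: "M \<ge> 1"
    and near: "\<bar>real_of_int n - w\<bar> \<le> k \<or> \<bar>real_of_int n + w\<bar> \<le> k"
  shows "\<bar>(sin (pi * real_of_int n / real M))\<^sup>2 - a\<bar> \<le> amp_error M a k"
proof -
  define \<theta> where "\<theta> = arcsin (sqrt a)"
  define x where "x = pi * real_of_int n / real M"
  have Mp: "real M > 0" using M by simp
  have sin_\<theta>: "sin \<theta> = sqrt a" and cos_\<theta>: "cos \<theta> = sqrt (1 - a)"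
    using sin_cos_arcsin_sqrt[OF a] by (simp_all add: \<theta>_def)
  have sin_2\<theta>: "\<bar>sin (2 * \<theta>)\<bar> = 2 * sqrt (a * (1 - a))"
    using a by (simp add: sin_double sin_\<theta> cos_\<theta> real_sqrt_mult)
  have "\<bar>x - \<theta>\<bar> = pi / real M * \<bar>real_of_int n - w\<bar>" "\<bar>- x - \<theta>\<bar> = pi / real M * \<bar>real_of_int n + w\<bar>"
    using Mp by (simp_all add: x_def w_def \<theta>_def abs_mult[symmetric] field_simps)
  then have "\<bar>x - \<theta>\<bar> \<le> pi / real M * k \<or> \<bar>- x - \<theta>\<bar> \<le> pi / real M * k"
    using near mult_left_mono[of _ k "pi / real M"] Mp by auto
  then obtain x' where "x' = x \<or> x' = - x" and x'_near: "\<bar>x' - \<theta>\<bar> \<le> pi / real M * k"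
    by blast
  then have x'_sin: "(sin x')\<^sup>2 = (sin x)\<^sup>2" by auto
  have "\<bar>(sin x)\<^sup>2 - a\<bar> \<le> \<bar>sin (2 * \<theta>)\<bar> * \<bar>x' - \<theta>\<bar> + (x' - \<theta>)\<^sup>2"
    using abs_sin_sq_diff_le[of x' \<theta>] x'_sin sin_\<theta> a by simp
  also have "\<dots> \<le> 2 * sqrt (a * (1 - a)) * (pi / real M * k) + (pi / real M * k)\<^sup>2"
  proof (rule add_mono)
    show "\<bar>sin (2 * \<theta>)\<bar> * \<bar>x' - \<theta>\<bar> \<le> 2 * sqrt (a * (1 - a)) * (pi / real M * k)"
      unfolding sin_2\<theta> using x'_near by (rule mult_left_mono) (use a in simp)
    show "(x' - \<theta>)\<^sup>2 \<le> (pi / real M * k)\<^sup>2"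
      using power_mono[OF x'_near abs_ge_zero, of 2] by simp
  qed
  finally show ?thesis
    using Mp by (simp add: amp_error_def x_def power2_eq_square field_simps)
qed

lemma sin_sq_pi_frac_periodic:
  "M \<ge> 1 \<Longrightarrow> (sin (pi * real_of_int (n + int M) / real M))\<^sup>2 = (sin (pi * real_of_int n / real M))\<^sup>2"
proof -
  assume "M \<ge> 1"
  then have "pi * real_of_int (n + int M) / real M = pi * real_of_int n / real M + pi"
    by (simp add: field_simps)
  then show ?thesis by (simp add: sin_add)
qed

lemma est_prob_error_as_fejer_masses:
  fixes k :: real
  assumes B: "finite B" "0 \<in> B" and \<chi>: "\<forall>x. \<chi> x \<in> {0, 1}" and U: "unitary_on B A"
    and M: "M \<ge> 1"
  defines "a \<equiv> amp B A \<chi>"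
  obtains w P where "w = real M * arcsin (sqrt a) / pi" and "\<And>n. P (n + int M) = P n"
    and "\<And>n. \<bar>real_of_int n - w\<bar> \<le> k \<Longrightarrow> P n" and "\<And>n. \<bar>real_of_int n - - w\<bar> \<le> k \<Longrightarrow> P n"
    and "est_prob B A \<chi> M (\<lambda>t. \<bar>t - a\<bar> \<le> amp_error M a k)
         = fejer_mass M w P / 2 + fejer_mass M (- w) P / 2"
proof
  let ?w = "real M * arcsin (sqrt a) / pi"
  let ?P = "\<lambda>n. \<bar>(sin (pi * real_of_int n / real M))\<^sup>2 - a\<bar> \<le> amp_error M a k"
  show "?P (n + int M) = ?P n" for n
    unfolding sin_sq_pi_frac_periodic[OF M] ..
  show "?P n" if "\<bar>real_of_int n - ?w\<bar> \<le> k" for n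
    using sin_sq_near_amp[of a M n k] amp_bounds[OF B U] that M by (simp add: a_def)
  show "?P n" if "\<bar>real_of_int n - - ?w\<bar> \<le> k" for n
    using sin_sq_near_amp[of a M n k] amp_bounds[OF B U] that M by (simp add: a_def)
  show "est_prob B A \<chi> M (\<lambda>t. \<bar>t - a\<bar> \<le> amp_error M a k)
         = fejer_mass M ?w ?P / 2 + fejer_mass M (- ?w) ?P / 2"
    unfolding est_prob_eq_fejer_mass[OF B \<chi> U M] a_def ..
qed simp

lemma est_prob_error_ge:
  fixes k :: real
  assumes B: "finite B" "0 \<in> B" and \<chi>: "\<forall>x. \<chi> x \<in> {0, 1}" and U: "unitary_on B A"
    and M: "M \<ge> 1" and k: "1 \<le> k"
  defines "a \<equiv> amp B A \<chi>"
  shows "8 / pi\<^sup>2 \<le> est_prob B A \<chi> M (\<lambda>t. \<bar>t - a\<bar> \<le> amp_error M a k)"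
proof -
  obtain w P where "w = real M * arcsin (sqrt a) / pi" and per: "\<And>n. P (n + int M) = P n"
    and near: "\<And>n. \<bar>real_of_int n - w\<bar> \<le> k \<Longrightarrow> P n" "\<And>n. \<bar>real_of_int n - - w\<bar> \<le> k \<Longrightarrow> P n"
    and est_prob_eq: "est_prob B A \<chi> M (\<lambda>t. \<bar>t - a\<bar> \<le> amp_error M a k)
         = fejer_mass M w P / 2 + fejer_mass M (- w) P / 2"
    by (rule est_prob_error_as_fejer_masses[OF B \<chi> U M, of k, folded a_def]) blast
  have "8 / pi\<^sup>2 \<le> fejer_mass M w P" "8 / pi\<^sup>2 \<le> fejer_mass M (- w) P"
    using near k by (intro fejer_mass_near_ge[where P = P, OF M per]; force)+
  then show ?thesis unfolding est_prob_eq by linarith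
qed

lemma est_prob_error_gt:
  assumes B: "finite B" "0 \<in> B" and \<chi>: "\<forall>x. \<chi> x \<in> {0, 1}" and U: "unitary_on B A"
    and M: "M \<ge> 1" and k: "2 \<le> k"
  defines "a \<equiv> amp B A \<chi>"
  shows "1 - 1 / (2 * (real k - 1)) < est_prob B A \<chi> M (\<lambda>t. \<bar>t - a\<bar> \<le> amp_error M a (real k))"
proof -
  obtain w P where "w = real M * arcsin (sqrt a) / pi" and per: "\<And>n. P (n + int M) = P n"
    and near: "\<And>n. \<bar>real_of_int n - w\<bar> \<le> k \<Longrightarrow> P n" "\<And>n. \<bar>real_of_int n - - w\<bar> \<le> k \<Longrightarrow> P n"
    and est_prob_eq: "est_prob B A \<chi> M (\<lambda>t. \<bar>t - a\<bar> \<le> amp_error M a (real k))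
         = fejer_mass M w P / 2 + fejer_mass M (- w) P / 2"
    by (rule est_prob_error_as_fejer_masses[OF B \<chi> U M, of "real k", folded a_def]) blast
  have "1 - 1 / (2 * (real k - 1)) < fejer_mass M w P" "1 - 1 / (2 * (real k - 1)) < fejer_mass M (- w) P"
    using near by (intro fejer_mass_near_gt[where P = P, OF M k per]; blast)+
  then show ?thesis unfolding est_prob_eq by linarith
qed

lemma est_prob_exact:
  assumes B: "finite B" "0 \<in> B" and \<chi>: "\<forall>x. \<chi> x \<in> {0, 1}" and U: "unitary_on B A"
    and M: "M \<ge> 1" and m: "real M * arcsin (sqrt (amp B A \<chi>)) / pi = real_of_int m"
  shows "est_prob B A \<chi> M (\<lambda>t. t = amp B A \<chi>) = 1"
proof -
  define a where "a = amp B A \<chi>"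
  obtain w P where w: "w = real M * arcsin (sqrt a) / pi" and per: "\<And>n. P (n + int M) = P n"
    and near: "\<And>n. \<bar>real_of_int n - w\<bar> \<le> 0 \<Longrightarrow> P n" "\<And>n. \<bar>real_of_int n - - w\<bar> \<le> 0 \<Longrightarrow> P n"
    and est_prob_eq: "est_prob B A \<chi> M (\<lambda>t. \<bar>t - a\<bar> \<le> amp_error M a 0)
         = fejer_mass M w P / 2 + fejer_mass M (- w) P / 2"
    by (rule est_prob_error_as_fejer_masses[OF B \<chi> U M, of 0, folded a_def]) blast
  have "w = real_of_int m" using m by (simp add: w a_def)
  then have "P m" "P (- m)" using near by simp_all
  then have "fejer_mass M w P = 1" "fejer_mass M (- w) P = 1"
    using fejer_mass_exact[where P = P, OF M per, of m] fejer_mass_exact[where P = P, OF M per, of "- m"]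
      \<open>w = real_of_int m\<close> by simp_all
  moreover have "(\<lambda>t. \<bar>t - a\<bar> \<le> amp_error M a 0) = (\<lambda>t. t = a)"
    by (simp add: amp_error_def fun_eq_iff)
  ultimately show ?thesis
    using est_prob_eq by (simp add: a_def)
qed

theorem theorem6:
  fixes B :: "nat set" and A :: mat and \<chi> :: "int \<Rightarrow> nat" and M :: nat
  assumes "finite B" and "0 \<in> B"
    and "\<forall>x. \<chi> x \<in> {0, 1}"
    and "unitary_on B A"
    and "M \<ge> 1"
  defines "a \<equiv> amp B A \<chi>"
  shows "(\<forall>y<M. 0 \<le> est_output M y \<and> est_output M y \<le> 1)
    \<and> est_prob B A \<chi> M (\<lambda>t. \<bar>t - a\<bar> \<le> 2 * pi * 1 * sqrt (a * (1 - a)) / real M + 1 ^ 2 * pi ^ 2 / (real M)^2)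
        \<ge> 8 / pi ^ 2
    \<and> (\<forall>k::nat. k \<ge> 2 \<longrightarrow>
        est_prob B A \<chi> M (\<lambda>t. \<bar>t - a\<bar> \<le> 2 * pi * real k * sqrt (a * (1 - a)) / real M + (real k)^2 * pi ^ 2 / (real M)^2)
          > 1 - 1 / (2 * (real k - 1)))
    \<and> (a = 0 \<longrightarrow> est_prob B A \<chi> M (\<lambda>t. t = 0) = 1)
    \<and> (a = 1 \<and> even M \<longrightarrow> est_prob B A \<chi> M (\<lambda>t. t = 1) = 1)"
proof (intro conjI allI impI)
  note hyps = assms(1-5)
  show "0 \<le> est_output M y" "est_output M y \<le> 1" for y
    by (simp_all add: est_output_def abs_square_le_1)
  show "est_prob B A \<chi> M (\<lambda>t. \<bar>t - a\<bar> \<le> 2 * pi * 1 * sqrt (a * (1 - a)) / real M + 1 ^ 2 * pi ^ 2 / (real M)^2)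
        \<ge> 8 / pi ^ 2"
    using est_prob_error_ge[OF hyps, of 1] unfolding a_def amp_error_def by simp
  show "est_prob B A \<chi> M (\<lambda>t. \<bar>t - a\<bar> \<le> 2 * pi * real k * sqrt (a * (1 - a)) / real M + (real k)^2 * pi ^ 2 / (real M)^2)
          > 1 - 1 / (2 * (real k - 1))" if "k \<ge> 2" for k
    using est_prob_error_gt[OF hyps that] unfolding a_def amp_error_def .
  show "est_prob B A \<chi> M (\<lambda>t. t = 0) = 1" if "a = 0"
    using est_prob_exact[OF hyps, of 0] that by (simp add: a_def)
  show "est_prob B A \<chi> M (\<lambda>t. t = 1) = 1" if "a = 1 \<and> even M"
  proof -
    from that obtain m where "M = 2 * m" by blast
    then show ?thesis
      using est_prob_exact[OF hyps, of "int m"] that by (simp add: a_def)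
  qed
qed

end
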